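(* Assume $K<\infty$. Let $\varepsilon_n\to0$ and $u_n\in L^1(a,b)$ with $\tilde E_{\varepsilon_n}(u_n)\le C_0$ for all $n$, where $\tilde E_\varepsilon(u)=\inf_{\gamma\in\mathcal M(a,b)}E_\varepsilon(u,\gamma)$. Then there is $u\in BV(a,b)$ with $\|u\|_{L^\infty(a,b)}\le K$ such that, along a subsequence, $u_n\to u$ in $L^1(a,b)$.
   Context: Fix $0<a<b<\infty$, $c_0>0$, $K\in(0,\infty)$; $f(t)=c_0\min\{t,1\}$; $I_\varepsilon(x)=(x-\varepsilon,x+\varepsilon)$; $\fint_Bh=\frac1{|B|}\int_Bh$. $\mathcal M(a,b)$ = finite signed Radon measures on $(a,b)$. $E_\varepsilon(u,\gamma)=\int_a^b|u'-g|^2dx+\frac1\varepsilon\int_a^bf\big(\varepsilon\fint_{I_\varepsilon(x)\cap(a,b)}|g|dt\big)dx$ if $u\in W^{1,1}(a,b)$, $\|u\|_{L^\infty}\le K$, $\gamma=g\mathcal L^1$ with $g\in L^1(a,b)$, $u'-g\in L^2(a,b)$; $+\infty$ otherwise. *)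

theory Defs
  imports "HOL-Analysis.Analysis"
begin

definition trunc_f :: "real \<Rightarrow> real \<Rightarrow> real" where
  "trunc_f c0 t = c0 * min t 1"

definition avg_abs :: "real \<Rightarrow> real \<Rightarrow> real \<Rightarrow> (real \<Rightarrow> real) \<Rightarrow> real \<Rightarrow> real" where
  "avg_abs a b eps g x =
     (LINT t:({x - eps<..<x + eps} \<inter> {a<..<b})|lborel. \<bar>g t\<bar>)
       / measure lborel ({x - eps<..<x + eps} \<inter> {a<..<b})"

definition W11_deriv :: "real \<Rightarrow> real \<Rightarrow> (real \<Rightarrow> real) \<Rightarrow> (real \<Rightarrow> real) \<Rightarrow> bool" where
  "W11_deriv a b u h \<longleftrightarrow>
     set_integrable lborel {a<..<b} u \<and> set_integrable lborel {a<..<b} h \<and>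
     (\<exists>c. AE x in lborel. x \<in> {a<..<b} \<longrightarrow> u x = c + (LINT t:{a<..x}|lborel. h t))"

definition admissible :: "real \<Rightarrow> real \<Rightarrow> real \<Rightarrow> (real \<Rightarrow> real) \<Rightarrow> (real \<Rightarrow> real) \<Rightarrow> (real \<Rightarrow> real) \<Rightarrow> bool" where
  "admissible a b K u g h \<longleftrightarrow>
     W11_deriv a b u h \<and>
     (AE x in lborel. x \<in> {a<..<b} \<longrightarrow> \<bar>u x\<bar> \<le> K) \<and>
     set_integrable lborel {a<..<b} g \<and>
     set_integrable lborel {a<..<b} (\<lambda>x. (h x - g x)\<^sup>2)"

text \<open>E_eps(u, g L^1); +infinity when not admissible. The weak derivative u' is
  unique a.e., so choosing it by SOME does not affect the value.\<close>
definition energy :: "real \<Rightarrow> real \<Rightarrow> real \<Rightarrow> real \<Rightarrow> real \<Rightarrow> (real \<Rightarrow> real) \<Rightarrow> (real \<Rightarrow> real) \<Rightarrow> ennreal" where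
  "energy a b c0 K eps u g =
     (if \<exists>h. admissible a b K u g h then
        (let h = (SOME h. admissible a b K u g h) in
          (\<integral>\<^sup>+ x\<in>{a<..<b}. ennreal ((h x - g x)\<^sup>2) \<partial>lborel)
          + ennreal (1 / eps) *
            (\<integral>\<^sup>+ x\<in>{a<..<b}. ennreal (trunc_f c0 (eps * avg_abs a b eps g x)) \<partial>lborel))
      else top)"

text \<open>Relaxed energy: infimum over gamma; only gamma = g L^1 with g in L^1 give finite
  values, so the infimum ranges over densities g.\<close>
definition relaxed_energy :: "real \<Rightarrow> real \<Rightarrow> real \<Rightarrow> real \<Rightarrow> real \<Rightarrow> (real \<Rightarrow> real) \<Rightarrow> ennreal" where
  "relaxed_energy a b c0 K eps u = (INF g. energy a b c0 K eps u g)"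

definition test_fun :: "real \<Rightarrow> real \<Rightarrow> (real \<Rightarrow> real) \<Rightarrow> bool" where
  "test_fun a b \<phi> \<longleftrightarrow> \<phi> C1_differentiable_on UNIV \<and>
     (\<exists>c d. a < c \<and> c \<le> d \<and> d < b \<and> (\<forall>x. x \<notin> {c..d} \<longrightarrow> \<phi> x = 0)) \<and>
     (\<forall>x. \<bar>\<phi> x\<bar> \<le> 1)"

definition BV :: "real \<Rightarrow> real \<Rightarrow> (real \<Rightarrow> real) \<Rightarrow> bool" where
  "BV a b u \<longleftrightarrow> set_integrable lborel {a<..<b} u \<and>
     (\<exists>M. \<forall>\<phi>. test_fun a b \<phi> \<longrightarrow> (LINT x:{a<..<b}|lborel. u x * deriv \<phi> x) \<le> M)"

end

(* A finite energy bound controls how much u oscillates at the scale eps. If h is the weak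
   derivative of u and g a density of energy below C0, the primitive of h clamped to [-K, K] is a
   continuous representative U of u whose oscillation on the window [x - eps, x + eps] is at most
   min (2K, \<integral>|h|) \<le> min (2K, \<integral>|g|) + \<integral>|h - g|, integrals taken over the window. As
   min (2K, 2t) is at most a constant times c0 min (t, 1), the first term integrates over (a, b) to
   at most a constant times eps times the truncated part of the energy; by Fubini and
   |t| \<le> (1 + t^2)/2 the second one integrates to O(eps) as well. Consequently the window averages
   of U at scale eps are O(eps)-close to U in L^1 and have derivatives bounded in L^1 uniformly in
   eps. Helly's selection theorem yields a subsequence of these averages converging a.e., hence in
   L^1 by dominated convergence; the limit is bounded by K, and it has bounded variation because
   its pairing with derivatives of test functions is the limit of the pairings of the averages. *)

theory Submission
  imports Defs "HOL-Probability.Helly_Selection"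
begin

lemma integrable_on_Icc_of_set_integrable_Ioo:
  fixes f :: "real \<Rightarrow> real"
  assumes "set_integrable lborel {a<..<b} f" "a \<le> p" "q \<le> b"
  shows "f integrable_on {p..q}"
proof -
  have "set_integrable lborel {p<..<q} f"
    by (rule set_integrable_subset[OF assms(1)]) (use assms in auto)
  then show ?thesis
    using set_borel_integral_eq_integral(1) integrable_on_open_interval_real by blast
qed

lemma integral_Icc_eq_set_integral_Ioo:
  fixes f :: "real \<Rightarrow> real"
  assumes "set_integrable lborel {a<..<b} f" "a \<le> p" "q \<le> b"
  shows "integral {p..q} f = (LINT s:{p<..<q}|lborel. f s)"
proof -
  have "set_integrable lborel {p<..<q} f"
    by (rule set_integrable_subset[OF assms(1)]) (use assms in auto)
  then show ?thesis
    by (simp add: set_borel_integral_eq_integral(2) integral_open_interval_real)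
qed

lemma set_integrable_bounded_Ioo:
  fixes f :: "real \<Rightarrow> real"
  assumes "f \<in> borel_measurable borel" "\<And>x. x \<in> {a<..<b} \<Longrightarrow> \<bar>f x\<bar> \<le> B"
  shows "set_integrable lborel {a<..<b} f"
  unfolding set_integrable_def
proof (rule integrableI_bounded_set[where A="{a<..<b}" and B=B])
  show "emeasure lborel {a<..<b} < \<infinity>"
    by (cases "a \<le> b") auto
qed (use assms in auto)

lemma set_integral_abs_diff_cong_AE:
  fixes f g v :: "'a \<Rightarrow> real"
  assumes "set_integrable M A f" "set_integrable M A g" "set_integrable M A v"
    and "AE x in M. x \<in> A \<longrightarrow> f x = g x"
  shows "(LINT x:A|M. \<bar>f x - v x\<bar>) = (LINT x:A|M. \<bar>g x - v x\<bar>)"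
proof -
  have "set_integrable M A (\<lambda>x. \<bar>f x - v x\<bar>)" "set_integrable M A (\<lambda>x. \<bar>g x - v x\<bar>)"
    using assms(1-3) by (auto intro!: set_integrable_abs set_integral_diff(1))
  then show ?thesis
    unfolding set_lebesgue_integral_def set_integrable_def
  proof (intro integral_cong_AE borel_measurable_integrable)
    show "AE x in M. indicator A x *\<^sub>R \<bar>f x - v x\<bar> = indicator A x *\<^sub>R \<bar>g x - v x\<bar>"
      using assms(4) by eventually_elim (auto split: split_indicator)
  qed
qed

lemma nn_integral_window:
  fixes r :: "real \<Rightarrow> real" and e :: real
  assumes r: "r \<in> borel_measurable borel" "\<And>s. r s \<ge> 0" and e: "e > 0"
  shows "(\<integral>\<^sup>+x. (\<integral>\<^sup>+s. ennreal (indicator {x - e..x + e} s * r s) \<partial>lborel) \<partial>lborel)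
           = ennreal (2 * e) * (\<integral>\<^sup>+s. ennreal (r s) \<partial>lborel)"
proof -
  have meas: "(\<lambda>(x, s). ennreal (indicator {x - e..x + e} s * r s)) \<in> borel_measurable (lborel \<Otimes>\<^sub>M lborel)"
  proof -
    have "(\<lambda>(x::real, s::real). ennreal (indicator {x - e..x + e} s * r s))
            = (\<lambda>p. ennreal (if fst p - e \<le> snd p \<and> snd p \<le> fst p + e then r (snd p) else 0))"
      by (auto simp: fun_eq_iff indicator_def)
    then show ?thesis using r(1) by simp
  qed
  have "(\<integral>\<^sup>+x. (\<integral>\<^sup>+s. ennreal (indicator {x - e..x + e} s * r s) \<partial>lborel) \<partial>lborel)
      = (\<integral>\<^sup>+s. (\<integral>\<^sup>+x. ennreal (indicator {x - e..x + e} s * r s) \<partial>lborel) \<partial>lborel)"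
    using lborel_pair.Fubini'[OF meas] by simp
  also have "\<dots> = (\<integral>\<^sup>+s. ennreal (r s) * emeasure lborel {s - e..s + e} \<partial>lborel)"
  proof (rule nn_integral_cong)
    fix s
    have "(\<integral>\<^sup>+x. ennreal (indicator {x - e..x + e} s * r s) \<partial>lborel)
            = (\<integral>\<^sup>+x. ennreal (r s) * indicator {s - e..s + e} x \<partial>lborel)"
      by (intro nn_integral_cong) (auto simp: indicator_def)
    then show "(\<integral>\<^sup>+x. ennreal (indicator {x - e..x + e} s * r s) \<partial>lborel)
                 = ennreal (r s) * emeasure lborel {s - e..s + e}"
      by (simp add: nn_integral_cmult_indicator)
  qed
  also have "\<dots> = (\<integral>\<^sup>+s. ennreal (r s) * ennreal (2 * e) \<partial>lborel)"
    using e by simp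
  also have "\<dots> = ennreal (2 * e) * (\<integral>\<^sup>+s. ennreal (r s) \<partial>lborel)"
    using r(1) by (subst nn_integral_multc) (auto simp: mult.commute)
  finally show ?thesis .
qed

lemma nn_integral_abs_le_square:
  fixes f :: "real \<Rightarrow> real"
  assumes ab: "a \<le> b" and sq: "set_integrable lborel {a<..<b} (\<lambda>x. (f x)\<^sup>2)"
  shows "(\<integral>\<^sup>+x\<in>{a<..<b}. ennreal \<bar>f x\<bar> \<partial>lborel)
           \<le> ennreal (1 / 2) * (ennreal (b - a) + (\<integral>\<^sup>+x\<in>{a<..<b}. ennreal ((f x)\<^sup>2) \<partial>lborel))"
proof -
  define q where "q x = indicator {a<..<b} x * (f x)\<^sup>2" for x
  have q_meas: "q \<in> borel_measurable borel"
    using sq unfolding set_integrable_def q_def by (auto dest: borel_measurable_integrable)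
  have "(\<integral>\<^sup>+x\<in>{a<..<b}. ennreal \<bar>f x\<bar> \<partial>lborel)
          \<le> (\<integral>\<^sup>+x. ennreal (1 / 2) * (indicator {a<..<b} x + ennreal (q x)) \<partial>lborel)"
  proof (rule nn_integral_mono)
    fix x
    have "\<bar>f x\<bar> \<le> 1 / 2 * (1 + (f x)\<^sup>2)"
      using power2_diff[of "\<bar>f x\<bar>" 1] zero_le_power2[of "\<bar>f x\<bar> - 1"] by (simp add: power2_abs)
    then have "ennreal \<bar>f x\<bar> \<le> ennreal (1 / 2 * (1 + (f x)\<^sup>2))"
      by (rule ennreal_leI)
    also have "\<dots> = ennreal (1 / 2) * ennreal (1 + (f x)\<^sup>2)"
      by (rule ennreal_mult') simp
    also have "ennreal (1 + (f x)\<^sup>2) = 1 + ennreal ((f x)\<^sup>2)"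
      by (subst ennreal_plus) auto
    finally have "ennreal \<bar>f x\<bar> \<le> ennreal (1 / 2) * (1 + ennreal ((f x)\<^sup>2))" .
    then show "ennreal \<bar>f x\<bar> * indicator {a<..<b} x \<le> ennreal (1 / 2) * (indicator {a<..<b} x + ennreal (q x))"
      unfolding q_def by (auto split: split_indicator)
  qed
  also have "\<dots> = ennreal (1 / 2) * ((\<integral>\<^sup>+x. indicator {a<..<b} x \<partial>lborel) + (\<integral>\<^sup>+x. ennreal (q x) \<partial>lborel))"
    using q_meas by (subst nn_integral_cmult, simp, subst nn_integral_add) auto
  also have "(\<integral>\<^sup>+x. ennreal (q x) \<partial>lborel) = (\<integral>\<^sup>+x\<in>{a<..<b}. ennreal ((f x)\<^sup>2) \<partial>lborel)"
    unfolding q_def by (intro nn_integral_cong) (auto split: split_indicator)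
  finally show ?thesis
    using ab by simp
qed

lemma set_nn_integral_le_cmult:
  fixes f t :: "real \<Rightarrow> real"
  assumes f: "f \<in> borel_measurable borel" and A: "A \<in> sets borel"
    and C: "C > 0" and le: "\<And>x. x \<in> A \<Longrightarrow> f x \<le> C * t x"
  shows "(\<integral>\<^sup>+x\<in>A. ennreal (f x) \<partial>lborel) \<le> ennreal C * (\<integral>\<^sup>+x\<in>A. ennreal (t x) \<partial>lborel)"
proof -
  have "(\<integral>\<^sup>+x\<in>A. ennreal (f x) \<partial>lborel) = (\<integral>\<^sup>+x. ennreal C * (ennreal (f x / C) * indicator A x) \<partial>lborel)"
  proof (intro nn_integral_cong)
    fix x
    have "ennreal (f x) = ennreal C * ennreal (f x / C)"
      using C by (subst ennreal_mult'[symmetric]) auto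
    then show "ennreal (f x) * indicator A x = ennreal C * (ennreal (f x / C) * indicator A x)"
      by (simp add: mult.assoc)
  qed
  also have "\<dots> = ennreal C * (\<integral>\<^sup>+x. ennreal (f x / C) * indicator A x \<partial>lborel)"
    using f A by (intro nn_integral_cmult) auto
  also have "\<dots> \<le> ennreal C * (\<integral>\<^sup>+x\<in>A. ennreal (t x) \<partial>lborel)"
    using le C by (intro mult_left_mono nn_integral_mono)
      (auto split: split_indicator intro!: ennreal_leI simp: divide_le_eq mult.commute)
  finally show ?thesis .
qed

section \<open>Clamped primitives and window integrals\<close>

definition clamped_primitive :: "real \<Rightarrow> real \<Rightarrow> (real \<Rightarrow> real) \<Rightarrow> real \<Rightarrow> real" where
  "clamped_primitive a b f x = integral {a..max a (min x b)} f"

lemma clamped_primitive_diff: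
  assumes "f integrable_on {a..b}" "a \<le> b" "y \<le> z"
  shows "clamped_primitive a b f z - clamped_primitive a b f y
           = integral {max a (min y b)..max a (min z b)} f"
proof -
  have "integral {a..max a (min y b)} f + integral {max a (min y b)..max a (min z b)} f
          = integral {a..max a (min z b)} f"
    using assms by (intro Henstock_Kurzweil_Integration.integral_combine integrable_subinterval_real[OF assms(1)]) auto
  then show ?thesis
    unfolding clamped_primitive_def by linarith
qed

lemma continuous_on_clamped_primitive:
  assumes "f integrable_on {a..b}" "a \<le> b"
  shows "continuous_on UNIV (clamped_primitive a b f)"
  unfolding clamped_primitive_def
  by (rule continuous_on_compose2[OF indefinite_integral_continuous_1[OF assms(1)]])
    (use assms(2) in \<open>auto intro!: continuous_intros\<close>)

lemma clamped_primitive_mono: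
  assumes "f integrable_on {a..b}" "\<And>x. x \<in> {a..b} \<Longrightarrow> f x \<ge> 0" "a \<le> b"
  shows "mono (clamped_primitive a b f)"
proof (rule monoI)
  fix y z :: real assume "y \<le> z"
  then have "0 \<le> integral {max a (min y b)..max a (min z b)} f"
    using assms by (intro integral_nonneg integrable_subinterval_real[OF assms(1)]) auto
  then show "clamped_primitive a b f y \<le> clamped_primitive a b f z"
    using clamped_primitive_diff[OF assms(1,3) \<open>y \<le> z\<close>] by linarith
qed

lemma clamped_primitive_bounds:
  assumes "f integrable_on {a..b}" "\<And>x. x \<in> {a..b} \<Longrightarrow> f x \<ge> 0" "a \<le> b"
  shows "0 \<le> clamped_primitive a b f x" "clamped_primitive a b f x \<le> integral {a..b} f"
  unfolding clamped_primitive_def using assms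
  by (auto intro!: integral_nonneg integral_subset_le integrable_subinterval_real[OF assms(1)])

lemma abs_clamped_primitive_diff_le:
  assumes "h integrable_on {a..b}" "(\<lambda>t. \<bar>h t\<bar>) integrable_on {a..b}" "a \<le> b" "s \<le> t"
  shows "\<bar>clamped_primitive a b h t - clamped_primitive a b h s\<bar>
           \<le> clamped_primitive a b (\<lambda>t. \<bar>h t\<bar>) t - clamped_primitive a b (\<lambda>t. \<bar>h t\<bar>) s"
proof -
  have "norm (integral {max a (min s b)..max a (min t b)} h)
          \<le> integral {max a (min s b)..max a (min t b)} (\<lambda>t. \<bar>h t\<bar>)"
    by (intro integral_norm_bound_integral integrable_subinterval_real[OF assms(1)]
        integrable_subinterval_real[OF assms(2)]) (use assms(3) in auto)
  then show ?thesis
    unfolding clamped_primitive_diff[OF assms(1,3,4)] clamped_primitive_diff[OF assms(2,3,4)]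
    by (simp only: real_norm_def)
qed

lemma clamped_primitive_eq_set_integral:
  fixes h :: "real \<Rightarrow> real"
  assumes h: "set_integrable lborel {a<..<b} h" and x: "x \<in> {a<..<b}"
  shows "clamped_primitive a b h x = (LINT t:{a<..x}|lborel. h t)"
proof -
  have "clamped_primitive a b h x = integral {a..x} h"
    using x by (simp add: clamped_primitive_def)
  also have "\<dots> = (LINT t:{a<..<x}|lborel. h t)"
    using x by (intro integral_Icc_eq_set_integral_Ioo[OF h]) auto
  also have "\<dots> = (LINT t:{a<..x}|lborel. h t)"
    unfolding set_lebesgue_integral_def
    by (rule integral_discrete_difference[where X="{x}"]) (auto simp: indicator_def)
  finally show ?thesis .
qed

definition window_integral :: "real \<Rightarrow> real \<Rightarrow> (real \<Rightarrow> real) \<Rightarrow> real \<Rightarrow> real \<Rightarrow> real" where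
  "window_integral a b f e x = clamped_primitive a b f (x + e) - clamped_primitive a b f (x - e)"

lemma window_integral_eq_integral:
  assumes "f integrable_on {a..b}" "x \<in> {a<..<b}" "e > 0"
  shows "window_integral a b f e x = integral {max a (x - e)..min b (x + e)} f"
  using clamped_primitive_diff[OF assms(1), of "x - e" "x + e"] assms(2,3)
  unfolding window_integral_def by (simp add: max_def min_def)

lemma continuous_on_window_integral:
  assumes "f integrable_on {a..b}" "a \<le> b"
  shows "continuous_on UNIV (window_integral a b f e)"
  unfolding window_integral_def[abs_def]
  by (intro continuous_intros continuous_on_compose2[OF continuous_on_clamped_primitive[OF assms]]) auto

lemma window_integral_nonneg:
  assumes "f integrable_on {a..b}" "\<And>x. x \<in> {a..b} \<Longrightarrow> f x \<ge> 0" "a \<le> b" "e \<ge> 0"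
  shows "window_integral a b f e x \<ge> 0"
  using monoD[OF clamped_primitive_mono[OF assms(1-3)], of "x - e" "x + e"] assms(4)
  unfolding window_integral_def by simp

lemma window_integral_le_add:
  assumes "f integrable_on {a..b}" "g1 integrable_on {a..b}" "g2 integrable_on {a..b}"
    and "\<And>x. f x \<le> g1 x + g2 x" "x \<in> {a<..<b}" "e > 0"
  shows "window_integral a b f e x \<le> window_integral a b g1 e x + window_integral a b g2 e x"
proof -
  let ?I = "{max a (x - e)..min b (x + e)}"
  have sub: "?I \<subseteq> {a..b}"
    by auto
  have "integral ?I f \<le> integral ?I (\<lambda>t. g1 t + g2 t)"
    using assms(4) integrable_on_subinterval[OF assms(1) sub] sub
    by (intro integral_le integrable_add integrable_on_subinterval[OF assms(2)] integrable_on_subinterval[OF assms(3)]) auto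
  also have "\<dots> = integral ?I g1 + integral ?I g2"
    using sub by (intro integral_add integrable_on_subinterval[OF assms(2)] integrable_on_subinterval[OF assms(3)]) auto
  finally show ?thesis
    using window_integral_eq_integral[OF _ assms(5,6)] assms(1-3) by simp
qed

lemma nn_integral_window_integral_le:
  fixes F :: "real \<Rightarrow> real"
  assumes F: "set_integrable lborel {a<..<b} F" and e: "e > 0"
  shows "(\<integral>\<^sup>+x\<in>{a<..<b}. ennreal (window_integral a b (\<lambda>t. \<bar>F t\<bar>) e x) \<partial>lborel)
           \<le> ennreal (2 * e) * (\<integral>\<^sup>+x\<in>{a<..<b}. ennreal \<bar>F x\<bar> \<partial>lborel)"
proof -
  define r where "r s = indicator {a<..<b} s * \<bar>F s\<bar>" for s
  have abs_F: "set_integrable lborel {a<..<b} (\<lambda>t. \<bar>F t\<bar>)"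
    using F by (rule set_integrable_abs)
  have r_int: "integrable lborel r"
    using abs_F unfolding set_integrable_def r_def by simp
  then have r_meas: "r \<in> borel_measurable borel"
    by (auto dest: borel_measurable_integrable)
  have r_nonneg: "r s \<ge> 0" for s
    unfolding r_def by simp
  have window: "ennreal (window_integral a b (\<lambda>t. \<bar>F t\<bar>) e x)
                  \<le> (\<integral>\<^sup>+s. ennreal (indicator {x - e..x + e} s * r s) \<partial>lborel)"
    if x: "x \<in> {a<..<b}" for x
  proof -
    define lo where "lo = max a (x - e)"
    define hi where "hi = min b (x + e)"
    have lh: "a \<le> lo" "lo \<le> hi" "hi \<le> b"
      using x e unfolding lo_def hi_def by auto
    have "window_integral a b (\<lambda>t. \<bar>F t\<bar>) e x = integral {lo..hi} (\<lambda>t. \<bar>F t\<bar>)"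
      unfolding lo_def hi_def
      by (rule window_integral_eq_integral[OF integrable_on_Icc_of_set_integrable_Ioo[OF abs_F] x e]) auto
    also have "\<dots> = (LINT s|lborel. indicator {lo<..<hi} s * r s)"
      using lh unfolding integral_Icc_eq_set_integral_Ioo[OF abs_F lh(1,3)] set_lebesgue_integral_def r_def
      by (intro Bochner_Integration.integral_cong) (auto split: split_indicator)
    also have "ennreal \<dots> = (\<integral>\<^sup>+s. ennreal (indicator {lo<..<hi} s * r s) \<partial>lborel)"
      using integrable_mult_indicator[OF _ r_int, of "{lo<..<hi}"] r_nonneg
      by (intro nn_integral_eq_integral[symmetric]) auto
    also have "\<dots> \<le> (\<integral>\<^sup>+s. ennreal (indicator {x - e..x + e} s * r s) \<partial>lborel)"
      using r_nonneg unfolding lo_def hi_def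
      by (intro nn_integral_mono ennreal_leI mult_right_mono) (auto split: split_indicator)
    finally show ?thesis .
  qed
  have "(\<integral>\<^sup>+x\<in>{a<..<b}. ennreal (window_integral a b (\<lambda>t. \<bar>F t\<bar>) e x) \<partial>lborel)
          \<le> (\<integral>\<^sup>+x. (\<integral>\<^sup>+s. ennreal (indicator {x - e..x + e} s * r s) \<partial>lborel) \<partial>lborel)"
    using window by (intro nn_integral_mono) (auto split: split_indicator)
  also have "\<dots> = ennreal (2 * e) * (\<integral>\<^sup>+s. ennreal (r s) \<partial>lborel)"
    by (rule nn_integral_window[OF r_meas r_nonneg e])
  also have "(\<integral>\<^sup>+s. ennreal (r s) \<partial>lborel) = (\<integral>\<^sup>+x\<in>{a<..<b}. ennreal \<bar>F x\<bar> \<partial>lborel)"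
    unfolding r_def by (intro nn_integral_cong) (auto split: split_indicator)
  finally show ?thesis .
qed

section \<open>Finite energy bounds the oscillation on windows\<close>

lemma abs_clamp_diff_le:
  fixes K p q :: real
  shows "\<bar>max (-K) (min K p) - max (-K) (min K q)\<bar> \<le> \<bar>p - q\<bar>"
  by (cases "p \<le> q") (auto simp: max_def min_def)

text \<open>The representative is the primitive \<open>c + \<integral>\<^sub>a\<^sup>x h\<close> clamped to \<open>[-K, K]\<close>; clamping does not
  destroy the a.e. equality with \<open>u\<close> because \<open>|u| \<le> K\<close> a.e.\<close>
lemma W11_deriv_continuous_representative:
  assumes u: "W11_deriv a b u h" and bounded: "AE x in lborel. x \<in> {a<..<b} \<longrightarrow> \<bar>u x\<bar> \<le> K"
    and ab: "a \<le> b" and K: "K \<ge> 0"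
  obtains U where "continuous_on UNIV U" "\<And>x. \<bar>U x\<bar> \<le> K"
    "AE x in lborel. x \<in> {a<..<b} \<longrightarrow> u x = U x"
    "\<And>y z s t. y \<le> z \<Longrightarrow> s \<in> {y..z} \<Longrightarrow> t \<in> {y..z} \<Longrightarrow>
       \<bar>U s - U t\<bar> \<le> clamped_primitive a b (\<lambda>t. \<bar>h t\<bar>) z - clamped_primitive a b (\<lambda>t. \<bar>h t\<bar>) y"
proof -
  obtain c where h: "set_integrable lborel {a<..<b} h"
    and primitive: "AE x in lborel. x \<in> {a<..<b} \<longrightarrow> u x = c + (LINT t:{a<..x}|lborel. h t)"
    using u unfolding W11_deriv_def by blast
  have h_int: "h integrable_on {a..b}" and abs_h_int: "(\<lambda>t. \<bar>h t\<bar>) integrable_on {a..b}"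
    using integrable_on_Icc_of_set_integrable_Ioo[OF h] integrable_on_Icc_of_set_integrable_Ioo[OF set_integrable_abs[OF h]]
    by auto
  define U where "U x = max (-K) (min K (c + clamped_primitive a b h x))" for x
  have abs_primitive_mono: "mono (clamped_primitive a b (\<lambda>t. \<bar>h t\<bar>))"
    using abs_h_int ab by (intro clamped_primitive_mono) auto
  have "continuous_on UNIV U"
    unfolding U_def by (intro continuous_intros continuous_on_clamped_primitive h_int ab)
  moreover have "\<bar>U x\<bar> \<le> K" for x
    unfolding U_def using K by auto
  moreover have "AE x in lborel. x \<in> {a<..<b} \<longrightarrow> u x = U x"
    using primitive bounded
  proof eventually_elim
    case (elim x)
    show ?case
    proof
      assume x: "x \<in> {a<..<b}"
      then show "u x = U x"
        using elim clamped_primitive_eq_set_integral[OF h x] unfolding U_def by auto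
    qed
  qed
  moreover have "\<bar>U s - U t\<bar> \<le> clamped_primitive a b (\<lambda>t. \<bar>h t\<bar>) z - clamped_primitive a b (\<lambda>t. \<bar>h t\<bar>) y"
    if "y \<le> z" "s \<in> {y..z}" "t \<in> {y..z}" for y z s t
  proof -
    have oriented: "\<bar>U s - U t\<bar> \<le> clamped_primitive a b (\<lambda>t. \<bar>h t\<bar>) z - clamped_primitive a b (\<lambda>t. \<bar>h t\<bar>) y"
      if "y \<le> s" "s \<le> t" "t \<le> z" for s t
    proof -
      have "\<bar>U s - U t\<bar> \<le> \<bar>clamped_primitive a b h t - clamped_primitive a b h s\<bar>"
        using abs_clamp_diff_le[of K "c + clamped_primitive a b h s" "c + clamped_primitive a b h t"]
        unfolding U_def by (simp add: abs_minus_commute)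
      also have "\<dots> \<le> clamped_primitive a b (\<lambda>t. \<bar>h t\<bar>) t - clamped_primitive a b (\<lambda>t. \<bar>h t\<bar>) s"
        by (rule abs_clamped_primitive_diff_le[OF h_int abs_h_int ab \<open>s \<le> t\<close>])
      also have "\<dots> \<le> clamped_primitive a b (\<lambda>t. \<bar>h t\<bar>) z - clamped_primitive a b (\<lambda>t. \<bar>h t\<bar>) y"
        using monoD[OF abs_primitive_mono \<open>y \<le> s\<close>] monoD[OF abs_primitive_mono \<open>t \<le> z\<close>] by linarith
      finally show ?thesis .
    qed
    show ?thesis
      using that oriented[of s t] oriented[of t s] by (cases "s \<le> t") (auto simp: abs_minus_commute)
  qed
  ultimately show thesis
    using that by blast
qed

lemma relaxed_energy_less_imp_admissible:
  assumes E: "relaxed_energy a b c0 K eps u < ennreal B" and eps: "eps > 0" and B: "B > 0"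
  obtains g h where "admissible a b K u g h"
    "(\<integral>\<^sup>+x\<in>{a<..<b}. ennreal ((h x - g x)\<^sup>2) \<partial>lborel) \<le> ennreal B"
    "(\<integral>\<^sup>+x\<in>{a<..<b}. ennreal (trunc_f c0 (eps * avg_abs a b eps g x)) \<partial>lborel) \<le> ennreal (eps * B)"
proof -
  obtain g where g: "energy a b c0 K eps u g < ennreal B"
    using E unfolding relaxed_energy_def by (auto simp: INF_less_iff)
  have admissible: "\<exists>h. admissible a b K u g h"
  proof (rule ccontr)
    assume "\<nexists>h. admissible a b K u g h"
    then have "energy a b c0 K eps u g = top"
      unfolding energy_def by (simp only: if_False)
    with g show False by simp
  qed
  define h where "h = (SOME h. admissible a b K u g h)"
  define E1 where "E1 = (\<integral>\<^sup>+x\<in>{a<..<b}. ennreal ((h x - g x)\<^sup>2) \<partial>lborel)"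
  define E2 where "E2 = (\<integral>\<^sup>+x\<in>{a<..<b}. ennreal (trunc_f c0 (eps * avg_abs a b eps g x)) \<partial>lborel)"
  have energy: "E1 + ennreal (1 / eps) * E2 < ennreal B"
    using g admissible unfolding energy_def h_def E1_def E2_def by (simp add: Let_def)
  have "E1 \<le> ennreal B"
    by (rule order_trans[OF add_increasing2[OF zero_le order_refl] less_imp_le[OF energy]])
  moreover have "E2 \<le> ennreal (eps * B)"
  proof -
    have "ennreal (1 / eps) * E2 \<le> ennreal B"
      by (rule order_trans[OF add_increasing[OF zero_le order_refl] less_imp_le[OF energy]])
    then have "ennreal eps * (ennreal (1 / eps) * E2) \<le> ennreal eps * ennreal B"
      by (rule mult_left_mono) simp
    then show ?thesis
      using eps B by (simp add: mult.assoc[symmetric] ennreal_mult[symmetric])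
  qed
  moreover have "admissible a b K u g h"
    unfolding h_def using admissible by (rule someI_ex)
  ultimately show thesis
    using that unfolding E1_def E2_def by blast
qed

lemma min_le_trunc_f:
  assumes "A \<le> 2 * t" "0 \<le> t" "c0 > 0"
  shows "min (2 * K) A \<le> 2 * max K 1 / c0 * trunc_f c0 t"
proof (cases "t \<le> 1")
  case True
  have "A \<le> 2 * max K 1 * t"
    using assms(1,2) mult_right_mono[of 1 "max K 1" t] by linarith
  then show ?thesis
    using True assms(3) unfolding trunc_f_def by simp
next
  case False
  then show ?thesis
    using assms(3) unfolding trunc_f_def by simp
qed

lemma window_integral_le_avg_abs:
  assumes g: "set_integrable lborel {a<..<b} g" and x: "x \<in> {a<..<b}" and e: "e > 0"
  shows "window_integral a b (\<lambda>t. \<bar>g t\<bar>) e x \<le> 2 * e * avg_abs a b e g x"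
    and "0 \<le> avg_abs a b e g x"
proof -
  define lo where "lo = max a (x - e)"
  define hi where "hi = min b (x + e)"
  have lh: "a \<le> lo" "lo < hi" "hi \<le> b" "hi - lo \<le> 2 * e"
    using x e unfolding lo_def hi_def by auto
  have abs_g: "set_integrable lborel {a<..<b} (\<lambda>t. \<bar>g t\<bar>)"
    using g by (rule set_integrable_abs)
  define G where "G = (LINT t:{lo<..<hi}|lborel. \<bar>g t\<bar>)"
  have "window_integral a b (\<lambda>t. \<bar>g t\<bar>) e x = integral {lo..hi} (\<lambda>t. \<bar>g t\<bar>)"
    unfolding lo_def hi_def
    by (rule window_integral_eq_integral[OF integrable_on_Icc_of_set_integrable_Ioo[OF abs_g] x e]) auto
  also have "\<dots> = G"
    unfolding G_def using lh by (intro integral_Icc_eq_set_integral_Ioo[OF abs_g]) auto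
  finally have window: "window_integral a b (\<lambda>t. \<bar>g t\<bar>) e x = G" .
  have "{x - e<..<x + e} \<inter> {a<..<b} = {lo<..<hi}"
    unfolding lo_def hi_def by auto
  then have avg: "avg_abs a b e g x = G / (hi - lo)"
    unfolding avg_abs_def G_def using lh by simp
  have "0 \<le> G"
    unfolding G_def set_lebesgue_integral_def by (intro Bochner_Integration.integral_nonneg) simp
  then show nonneg: "0 \<le> avg_abs a b e g x"
    using avg lh by simp
  have "G = (hi - lo) * avg_abs a b e g x"
    using avg lh by simp
  also have "\<dots> \<le> 2 * e * avg_abs a b e g x"
    using lh nonneg by (intro mult_right_mono) auto
  finally show "window_integral a b (\<lambda>t. \<bar>g t\<bar>) e x \<le> 2 * e * avg_abs a b e g x"
    using window by simp
qed

lemma min_window_integral_le: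
  assumes g: "set_integrable lborel {a<..<b} g" and h: "set_integrable lborel {a<..<b} h"
    and x: "x \<in> {a<..<b}" and e: "e > 0" and c0: "c0 > 0"
  shows "min (2 * K) (window_integral a b (\<lambda>t. \<bar>h t\<bar>) e x)
           \<le> 2 * max K 1 / c0 * trunc_f c0 (e * avg_abs a b e g x)
               + window_integral a b (\<lambda>t. \<bar>h t - g t\<bar>) e x"
proof -
  have ab: "a \<le> b"
    using x by simp
  have int: "(\<lambda>t. \<bar>h t\<bar>) integrable_on {a..b}" "(\<lambda>t. \<bar>g t\<bar>) integrable_on {a..b}"
    "(\<lambda>t. \<bar>h t - g t\<bar>) integrable_on {a..b}"
    using g h by (auto intro!: integrable_on_Icc_of_set_integrable_Ioo set_integrable_abs set_integral_diff(1))
  have "window_integral a b (\<lambda>t. \<bar>h t\<bar>) e x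
          \<le> window_integral a b (\<lambda>t. \<bar>g t\<bar>) e x + window_integral a b (\<lambda>t. \<bar>h t - g t\<bar>) e x"
    using int x e by (intro window_integral_le_add) auto
  moreover have "0 \<le> window_integral a b (\<lambda>t. \<bar>h t - g t\<bar>) e x"
    using int(3) ab e by (intro window_integral_nonneg) auto
  moreover have "min (2 * K) (window_integral a b (\<lambda>t. \<bar>g t\<bar>) e x)
                   \<le> 2 * max K 1 / c0 * trunc_f c0 (e * avg_abs a b e g x)"
    using window_integral_le_avg_abs[OF g x e] e c0 by (intro min_le_trunc_f) auto
  ultimately show ?thesis
    by linarith
qed

lemma set_nn_integral_Icc_eq_Ioo:
  fixes f :: "real \<Rightarrow> ennreal"
  shows "(\<integral>\<^sup>+x\<in>{a..b}. f x \<partial>lborel) = (\<integral>\<^sup>+x\<in>{a<..<b}. f x \<partial>lborel)"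
proof (rule nn_integral_cong_AE)
  show "AE x in lborel. f x * indicator {a..b} x = f x * indicator {a<..<b} x"
    using AE_lborel_singleton[of a] AE_lborel_singleton[of b] by eventually_elim (auto simp: indicator_def)
qed

lemma set_nn_integral_le_split:
  fixes f g :: "real \<Rightarrow> real"
  assumes "f \<in> borel_measurable borel" "g \<in> borel_measurable borel" "\<And>x. g x \<ge> 0" "A \<in> sets borel"
  shows "(\<integral>\<^sup>+x\<in>A. ennreal (f x) \<partial>lborel)
           \<le> (\<integral>\<^sup>+x\<in>A. ennreal (max 0 (f x - g x)) \<partial>lborel) + (\<integral>\<^sup>+x\<in>A. ennreal (g x) \<partial>lborel)"
proof -
  have "ennreal (f x) \<le> ennreal (max 0 (f x - g x)) + ennreal (g x)" for x
    using assms(3)[of x] by (simp add: ennreal_plus[symmetric] ennreal_leI del: ennreal_plus)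
  then have "(\<integral>\<^sup>+x\<in>A. ennreal (f x) \<partial>lborel)
               \<le> (\<integral>\<^sup>+x. ennreal (max 0 (f x - g x)) * indicator A x + ennreal (g x) * indicator A x \<partial>lborel)"
    by (intro nn_integral_mono) (auto split: split_indicator)
  also have "\<dots> = (\<integral>\<^sup>+x\<in>A. ennreal (max 0 (f x - g x)) \<partial>lborel) + (\<integral>\<^sup>+x\<in>A. ennreal (g x) \<partial>lborel)"
    using assms(1,2,4) by (intro nn_integral_add) auto
  finally show ?thesis .
qed

lemma nn_integral_window_integral_le_square:
  fixes F :: "real \<Rightarrow> real"
  assumes ab: "a \<le> b" and F: "set_integrable lborel {a<..<b} F" and sq: "set_integrable lborel {a<..<b} (\<lambda>x. (F x)\<^sup>2)"
    and e: "e > 0" and B: "B \<ge> 0" and bound: "(\<integral>\<^sup>+x\<in>{a<..<b}. ennreal ((F x)\<^sup>2) \<partial>lborel) \<le> ennreal B"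
  shows "(\<integral>\<^sup>+x\<in>{a<..<b}. ennreal (window_integral a b (\<lambda>t. \<bar>F t\<bar>) e x) \<partial>lborel) \<le> ennreal (e * ((b - a) + B))"
proof -
  have "(\<integral>\<^sup>+x\<in>{a<..<b}. ennreal (window_integral a b (\<lambda>t. \<bar>F t\<bar>) e x) \<partial>lborel)
          \<le> ennreal (2 * e) * (\<integral>\<^sup>+x\<in>{a<..<b}. ennreal \<bar>F x\<bar> \<partial>lborel)"
    by (rule nn_integral_window_integral_le[OF F e])
  also have "\<dots> \<le> ennreal (2 * e) * (ennreal (1 / 2) * (ennreal (b - a) + ennreal B))"
    by (intro mult_left_mono order_trans[OF nn_integral_abs_le_square[OF ab sq]] add_left_mono bound) auto
  also have "ennreal (b - a) + ennreal B = ennreal ((b - a) + B)"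
    using ab B by (intro ennreal_plus[symmetric]) auto
  also have "ennreal (2 * e) * (ennreal (1 / 2) * ennreal ((b - a) + B)) = ennreal e * ennreal ((b - a) + B)"
  proof -
    have "ennreal (2 * e) * ennreal (1 / 2) = ennreal e"
      by (subst ennreal_mult'[symmetric]) (use e in auto)
    then show ?thesis
      by (simp only: mult.assoc[symmetric])
  qed
  also have "\<dots> = ennreal (e * ((b - a) + B))"
    by (rule ennreal_mult'[symmetric]) (use e in simp)
  finally show ?thesis .
qed

lemma nn_integral_min_window_integral_le:
  fixes g h :: "real \<Rightarrow> real"
  assumes ab: "a \<le> b" and g: "set_integrable lborel {a<..<b} g" and h: "set_integrable lborel {a<..<b} h"
    and sq: "set_integrable lborel {a<..<b} (\<lambda>x. (h x - g x)\<^sup>2)"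
    and e: "e > 0" and c0: "c0 > 0" and B: "B \<ge> 0"
    and E1: "(\<integral>\<^sup>+x\<in>{a<..<b}. ennreal ((h x - g x)\<^sup>2) \<partial>lborel) \<le> ennreal B"
    and E2: "(\<integral>\<^sup>+x\<in>{a<..<b}. ennreal (trunc_f c0 (e * avg_abs a b e g x)) \<partial>lborel) \<le> ennreal (e * B)"
  shows "(\<integral>\<^sup>+x\<in>{a..b}. ennreal (min (2 * K) (window_integral a b (\<lambda>t. \<bar>h t\<bar>) e x)) \<partial>lborel)
           \<le> ennreal (e * (2 * max K 1 * B / c0 + (b - a) + B))"
proof -
  define C where "C = 2 * max K 1 / c0"
  define \<theta> where "\<theta> x = min (2 * K) (window_integral a b (\<lambda>t. \<bar>h t\<bar>) e x)" for x
  define R where "R = window_integral a b (\<lambda>t. \<bar>h t - g t\<bar>) e"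
  have C: "C > 0"
    unfolding C_def using c0 by simp
  have diff: "set_integrable lborel {a<..<b} (\<lambda>x. h x - g x)"
    using h g by (rule set_integral_diff(1))
  have int: "(\<lambda>t. \<bar>h t\<bar>) integrable_on {a..b}" "(\<lambda>t. \<bar>h t - g t\<bar>) integrable_on {a..b}"
    using h diff by (auto intro!: integrable_on_Icc_of_set_integrable_Ioo set_integrable_abs)
  have \<theta>_meas: "\<theta> \<in> borel_measurable borel" and R_meas: "R \<in> borel_measurable borel"
    unfolding \<theta>_def R_def
    by (intro borel_measurable_continuous_onI continuous_intros continuous_on_window_integral int ab)+
  have R_nonneg: "R x \<ge> 0" for x
    unfolding R_def using int(2) ab e by (intro window_integral_nonneg) auto
  have excess: "max 0 (\<theta> x - R x) \<le> C * trunc_f c0 (e * avg_abs a b e g x)" if x: "x \<in> {a<..<b}" for x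
  proof -
    have "0 \<le> C * trunc_f c0 (e * avg_abs a b e g x)"
      using window_integral_le_avg_abs(2)[OF g x e] e C c0 unfolding trunc_f_def by simp
    moreover have "\<theta> x \<le> C * trunc_f c0 (e * avg_abs a b e g x) + R x"
      unfolding \<theta>_def C_def R_def by (rule min_window_integral_le[OF g h x e c0])
    ultimately show ?thesis
      by (intro max.boundedI) auto
  qed
  have "(\<integral>\<^sup>+x\<in>{a..b}. ennreal (\<theta> x) \<partial>lborel)
          \<le> (\<integral>\<^sup>+x\<in>{a<..<b}. ennreal (max 0 (\<theta> x - R x)) \<partial>lborel) + (\<integral>\<^sup>+x\<in>{a<..<b}. ennreal (R x) \<partial>lborel)"
    unfolding set_nn_integral_Icc_eq_Ioo using \<theta>_meas R_meas R_nonneg by (rule set_nn_integral_le_split) simp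
  also have "\<dots> \<le> ennreal C * (\<integral>\<^sup>+x\<in>{a<..<b}. ennreal (trunc_f c0 (e * avg_abs a b e g x)) \<partial>lborel)
                  + ennreal (e * ((b - a) + B))"
    using \<theta>_meas R_meas C excess unfolding R_def
    by (intro add_mono set_nn_integral_le_cmult nn_integral_window_integral_le_square[OF ab diff sq e B E1]) auto
  also have "\<dots> \<le> ennreal C * ennreal (e * B) + ennreal (e * ((b - a) + B))"
    by (intro add_right_mono mult_left_mono E2) simp
  also have "ennreal C * ennreal (e * B) = ennreal (C * (e * B))"
    by (rule ennreal_mult'[symmetric]) (use C in simp)
  also have "ennreal (C * (e * B)) + ennreal (e * ((b - a) + B)) = ennreal (C * (e * B) + e * ((b - a) + B))"
    using C e B ab by (intro ennreal_plus[symmetric]) auto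
  also have "C * (e * B) + e * ((b - a) + B) = e * (2 * max K 1 * B / c0 + (b - a) + B)"
    unfolding C_def by (simp add: field_simps)
  finally show ?thesis
    unfolding \<theta>_def by simp
qed

definition window_oscillation_integral_le ::
    "real \<Rightarrow> real \<Rightarrow> real \<Rightarrow> real \<Rightarrow> (real \<Rightarrow> real) \<Rightarrow> bool" where
  "window_oscillation_integral_le a b e V U \<longleftrightarrow>
     (\<exists>\<theta>. \<theta> \<in> borel_measurable lborel \<and>
       (\<forall>x\<in>{a..b}. \<forall>s\<in>{x - e..x + e}. \<forall>t\<in>{x - e..x + e}. \<bar>U s - U t\<bar> \<le> \<theta> x) \<and>
       (\<integral>\<^sup>+x\<in>{a..b}. ennreal (\<theta> x) \<partial>lborel) \<le> ennreal (e * V))"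

lemma finite_energy_window_oscillation:
  fixes u :: "real \<Rightarrow> real"
  assumes ab: "a \<le> b" and c0: "c0 > 0" and K: "K \<ge> 0" and eps: "eps > 0"
    and E: "relaxed_energy a b c0 K eps u \<le> ennreal C0"
  defines "B \<equiv> max C0 0 + 1"
  shows "\<exists>U. continuous_on UNIV U \<and> (\<forall>x. \<bar>U x\<bar> \<le> K) \<and> (AE x in lborel. x \<in> {a<..<b} \<longrightarrow> u x = U x) \<and>
           window_oscillation_integral_le a b eps (2 * max K 1 * B / c0 + (b - a) + B) U"
proof -
  have B: "B > 0"
    unfolding B_def by simp
  have "relaxed_energy a b c0 K eps u < ennreal B"
    using E by (rule le_less_trans) (unfold B_def, intro ennreal_lessI, auto)
  then obtain g h where admissible: "admissible a b K u g h"
    and E1: "(\<integral>\<^sup>+x\<in>{a<..<b}. ennreal ((h x - g x)\<^sup>2) \<partial>lborel) \<le> ennreal B"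
    and E2: "(\<integral>\<^sup>+x\<in>{a<..<b}. ennreal (trunc_f c0 (eps * avg_abs a b eps g x)) \<partial>lborel) \<le> ennreal (eps * B)"
    using relaxed_energy_less_imp_admissible[OF _ eps B] by blast
  then have W11: "W11_deriv a b u h" and u_bounded: "AE x in lborel. x \<in> {a<..<b} \<longrightarrow> \<bar>u x\<bar> \<le> K"
    and g: "set_integrable lborel {a<..<b} g" and sq: "set_integrable lborel {a<..<b} (\<lambda>x. (h x - g x)\<^sup>2)"
    unfolding admissible_def by blast+
  then have h: "set_integrable lborel {a<..<b} h"
    unfolding W11_deriv_def by blast
  obtain U where U: "continuous_on UNIV U" "\<And>x. \<bar>U x\<bar> \<le> K" "AE x in lborel. x \<in> {a<..<b} \<longrightarrow> u x = U x"
    and osc: "\<And>y z s t. y \<le> z \<Longrightarrow> s \<in> {y..z} \<Longrightarrow> t \<in> {y..z} \<Longrightarrow>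
       \<bar>U s - U t\<bar> \<le> clamped_primitive a b (\<lambda>t. \<bar>h t\<bar>) z - clamped_primitive a b (\<lambda>t. \<bar>h t\<bar>) y"
    using W11_deriv_continuous_representative[OF W11 u_bounded ab K] by blast
  define \<theta> where "\<theta> x = min (2 * K) (window_integral a b (\<lambda>t. \<bar>h t\<bar>) eps x)" for x
  have "\<theta> \<in> borel_measurable borel"
    unfolding \<theta>_def using h ab
    by (intro borel_measurable_continuous_onI continuous_intros continuous_on_window_integral
        integrable_on_Icc_of_set_integrable_Ioo set_integrable_abs) auto
  then have "\<theta> \<in> borel_measurable lborel"
    by simp
  moreover have "\<bar>U s - U t\<bar> \<le> \<theta> x" if "s \<in> {x - eps..x + eps}" "t \<in> {x - eps..x + eps}" for x s t
    using osc[OF _ that] U(2)[of s] U(2)[of t] eps unfolding \<theta>_def window_integral_def by auto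
  moreover have "(\<integral>\<^sup>+x\<in>{a..b}. ennreal (\<theta> x) \<partial>lborel) \<le> ennreal (eps * (2 * max K 1 * B / c0 + (b - a) + B))"
    unfolding \<theta>_def using ab g h sq eps c0 B E1 E2 by (intro nn_integral_min_window_integral_le) auto
  ultimately have "window_oscillation_integral_le a b eps (2 * max K 1 * B / c0 + (b - a) + B) U"
    unfolding window_oscillation_integral_le_def by blast
  with U show ?thesis
    by blast
qed

section \<open>Compactness\<close>

lemma test_fun_deriv:
  assumes "test_fun a b \<phi>"
  obtains c d where "a < c" "c \<le> d" "d < b"
    and "\<And>x. (\<phi> has_real_derivative deriv \<phi> x) (at x)"
    and "continuous_on UNIV (deriv \<phi>)"
    and "\<And>x. x \<notin> {c..d} \<Longrightarrow> \<phi> x = 0 \<and> deriv \<phi> x = 0"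
proof -
  from assms obtain c d where C1: "\<phi> C1_differentiable_on UNIV" and cd: "a < c" "c \<le> d" "d < b"
    and zero: "\<And>x. x \<notin> {c..d} \<Longrightarrow> \<phi> x = 0"
    unfolding test_fun_def by blast
  have deriv: "(\<phi> has_real_derivative deriv \<phi> x) (at x)" for x
    using C1 unfolding C1_differentiable_on_eq DERIV_deriv_iff_real_differentiable by auto
  have "vector_derivative \<phi> (at x) = deriv \<phi> x" for x
    using deriv[of x] by (intro vector_derivative_at) (simp add: has_real_derivative_iff_has_vector_derivative)
  then have "continuous_on UNIV (deriv \<phi>)"
    using C1 unfolding C1_differentiable_on_eq by auto
  moreover have "deriv \<phi> x = 0" if x: "x \<notin> {c..d}" for x
  proof -
    define S where "S = (if x < c then {..<c} else {d<..})"
    have S: "open S" "x \<in> S" "\<And>y. y \<in> S \<Longrightarrow> \<phi> y = 0"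
      using x zero cd(2) unfolding S_def by (auto split: if_splits)
    have "((\<lambda>_. 0) has_real_derivative 0) (at x)" by simp
    then have "(\<phi> has_real_derivative 0) (at x)"
      by (rule has_field_derivative_transform_within_open[OF _ S(1,2)]) (simp add: S(3))
    then show ?thesis using deriv[of x] DERIV_unique by blast
  qed
  ultimately show thesis
    using that cd deriv zero by blast
qed

lemma test_fun_deriv_bounded:
  assumes "test_fun a b \<phi>"
  obtains M where "\<And>x. \<bar>deriv \<phi> x\<bar> \<le> M"
proof -
  obtain c d where cont: "continuous_on UNIV (deriv \<phi>)"
    and zero: "\<And>x. x \<notin> {c..d} \<Longrightarrow> deriv \<phi> x = 0"
    using test_fun_deriv[OF assms] by metis
  have "compact (deriv \<phi> ` {c..d})"
    by (intro compact_continuous_image continuous_on_subset[OF cont]) auto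
  then obtain B where B: "\<And>x. x \<in> {c..d} \<Longrightarrow> \<bar>deriv \<phi> x\<bar> \<le> B"
    by (metis compact_imp_bounded bounded_iff image_eqI real_norm_def)
  have "\<bar>deriv \<phi> x\<bar> \<le> max B 0" for x
    using B[of x] zero[of x] by (cases "x \<in> {c..d}") auto
  then show thesis by (rule that)
qed

lemma set_integral_mult_deriv_test_fun_le:
  fixes W D \<phi> :: "real \<Rightarrow> real"
  assumes W: "\<And>x. (W has_real_derivative D x) (at x)" and D: "continuous_on UNIV D"
    and \<phi>: "test_fun a b \<phi>"
  shows "(LINT x:{a<..<b}|lborel. W x * deriv \<phi> x) \<le> integral {a..b} (\<lambda>x. \<bar>D x\<bar>)"
proof -
  obtain c d where cd: "a < c" "c \<le> d" "d < b"
    and \<phi>_deriv: "\<And>x. (\<phi> has_real_derivative deriv \<phi> x) (at x)"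
    and deriv_cont: "continuous_on UNIV (deriv \<phi>)"
    and zero: "\<And>x. x \<notin> {c..d} \<Longrightarrow> \<phi> x = 0 \<and> deriv \<phi> x = 0"
    using test_fun_deriv[OF \<phi>] by metis
  define c' where "c' = (a + c) / 2"
  define d' where "d' = (d + b) / 2"
  have cd': "a < c'" "c' < c" "d < d'" "d' < b" "c' \<le> d'"
    using cd by (auto simp: c'_def d'_def)
  have W_cont: "continuous_on UNIV W"
    using W by (intro continuous_at_imp_continuous_on) (auto intro: DERIV_isCont)
  have \<phi>_cont: "continuous_on UNIV \<phi>"
    using \<phi>_deriv by (intro continuous_at_imp_continuous_on) (auto intro: DERIV_isCont)
  have cont: "continuous_on {c'..d'} (\<lambda>x. W x * deriv \<phi> x)"
    by (intro continuous_intros continuous_on_subset[OF W_cont] continuous_on_subset[OF deriv_cont]) auto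
  have "(LINT x:{a<..<b}|lborel. W x * deriv \<phi> x) = (LINT x:{c'..d'}|lborel. W x * deriv \<phi> x)"
    unfolding set_lebesgue_integral_def
    by (intro Bochner_Integration.integral_cong refl)
      (use cd' zero in \<open>force simp: indicator_def\<close>)
  also have "\<dots> = integral {c'..d'} (\<lambda>x. W x * deriv \<phi> x)"
    by (intro set_borel_integral_eq_integral(2))
      (unfold set_integrable_def, rule borel_integrable_compact[OF compact_Icc cont])
  also have "\<dots> = - integral {c'..d'} (\<lambda>x. D x * \<phi> x)"
  proof -
    have "((\<lambda>x. D x * \<phi> x) has_integral (- integral {c'..d'} (\<lambda>x. W x * deriv \<phi> x))) {c'..d'}"
    proof (rule integration_by_parts[where prod="(*)" and f=W and g=\<phi>])
      show "((\<lambda>x. W x * deriv \<phi> x) has_integral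
          W d' * \<phi> d' - W c' * \<phi> c' - - integral {c'..d'} (\<lambda>x. W x * deriv \<phi> x)) {c'..d'}"
        using zero[of c'] zero[of d'] cd' by (simp add: integrable_integral integrable_continuous_real cont)
    qed (use W \<phi>_deriv cd' in \<open>auto simp: has_real_derivative_iff_has_vector_derivative bounded_bilinear_mult
           intro: continuous_on_subset[OF W_cont] continuous_on_subset[OF \<phi>_cont]\<close>)
    then show ?thesis by (simp add: integral_unique)
  qed
  also have "\<dots> \<le> integral {c'..d'} (\<lambda>x. \<bar>D x\<bar>)"
  proof -
    have "norm (integral {c'..d'} (\<lambda>x. D x * \<phi> x)) \<le> integral {c'..d'} (\<lambda>x. \<bar>D x\<bar>)"
      using \<phi> unfolding test_fun_def
      by (intro integral_norm_bound_integral integrable_continuous_real continuous_intros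
          continuous_on_subset[OF D] continuous_on_subset[OF \<phi>_cont]) (auto simp: abs_mult mult_left_le)
    then show ?thesis by simp
  qed
  also have "\<dots> \<le> integral {a..b} (\<lambda>x. \<bar>D x\<bar>)"
    using cd' by (intro integral_subset_le integrable_continuous_real continuous_intros continuous_on_subset[OF D]) auto
  finally show ?thesis .
qed

lemma Helly_selection_AE:
  fixes f :: "nat \<Rightarrow> real \<Rightarrow> real"
  assumes cont: "\<And>n. continuous_on UNIV (f n)" and mono: "\<And>n. mono (f n)"
    and bounded: "\<And>n x. \<bar>f n x\<bar> \<le> M"
  obtains s F where "strict_mono s" "F \<in> borel_measurable borel" "\<And>x. \<bar>F x\<bar> \<le> M"
    "AE x in lborel. (\<lambda>n. f (s n) x) \<longlonglongrightarrow> F x"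
proof -
  have right_cont: "continuous (at_right x) (f n)" for n x
    using cont by (rule continuous_on_imp_continuous_within) auto
  obtain s F where s: "strict_mono s" and F: "mono F" "\<And>x. \<bar>F x\<bar> \<le> M"
    and lim: "\<And>x. isCont F x \<Longrightarrow> (\<lambda>n. f (s n) x) \<longlonglongrightarrow> F x"
    using Helly_selection[of f M, OF right_cont mono bounded] by blast
  have "AE x in lborel. x \<notin> {x. \<not> isCont F x}"
    by (intro AE_not_in countable_imp_null_set_lborel mono_ctble_discont F(1))
  then have "AE x in lborel. (\<lambda>n. f (s n) x) \<longlonglongrightarrow> F x"
    by eventually_elim (use lim in blast)
  then show thesis
    using that s borel_measurable_mono[OF F(1)] F(2) by blast
qed

lemma Jordan_decomposition_C1:
  fixes W D :: "real \<Rightarrow> real"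
  assumes W: "\<And>x. (W has_real_derivative D x) (at x)" and D: "continuous_on UNIV D" and ab: "a \<le> b"
  defines "P \<equiv> clamped_primitive a b (\<lambda>t. max (D t) 0)" and "N \<equiv> clamped_primitive a b (\<lambda>t. max (- D t) 0)"
  shows "\<And>x. x \<in> {a..b} \<Longrightarrow> W x = W a + P x - N x"
    and "mono P" "mono N" "continuous_on UNIV P" "continuous_on UNIV N"
    and "\<And>x. \<bar>P x\<bar> \<le> integral {a..b} (\<lambda>x. \<bar>D x\<bar>)" "\<And>x. \<bar>N x\<bar> \<le> integral {a..b} (\<lambda>x. \<bar>D x\<bar>)"
proof -
  have int: "(\<lambda>t. max (D t) 0) integrable_on {a..b}" "(\<lambda>t. max (- D t) 0) integrable_on {a..b}"
    "(\<lambda>t. \<bar>D t\<bar>) integrable_on {a..b}"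
    by (intro integrable_continuous_real continuous_intros continuous_on_subset[OF D]; simp)+
  show "mono P" "mono N"
    unfolding P_def N_def using ab by (auto intro!: clamped_primitive_mono int)
  show "continuous_on UNIV P" "continuous_on UNIV N"
    unfolding P_def N_def using ab by (auto intro!: continuous_on_clamped_primitive int)
  have "integral {a..b} (\<lambda>t. max (D t) 0) \<le> integral {a..b} (\<lambda>t. \<bar>D t\<bar>)"
    "integral {a..b} (\<lambda>t. max (- D t) 0) \<le> integral {a..b} (\<lambda>t. \<bar>D t\<bar>)"
    by (intro integral_le int; simp)+
  moreover have "0 \<le> P x" "P x \<le> integral {a..b} (\<lambda>t. max (D t) 0)"
    "0 \<le> N x" "N x \<le> integral {a..b} (\<lambda>t. max (- D t) 0)" for x
    unfolding P_def N_def by (intro clamped_primitive_bounds int ab; simp)+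
  ultimately show "\<bar>P x\<bar> \<le> integral {a..b} (\<lambda>x. \<bar>D x\<bar>)" "\<bar>N x\<bar> \<le> integral {a..b} (\<lambda>x. \<bar>D x\<bar>)" for x
    by (smt (verit))+
  show "W x = W a + P x - N x" if x: "x \<in> {a..b}" for x
  proof -
    have "(D has_integral (W x - W a)) {a..x}"
      using x W by (intro fundamental_theorem_of_calculus)
        (auto simp: has_real_derivative_iff_has_vector_derivative intro: has_vector_derivative_at_within)
    moreover have "((\<lambda>t. max (D t) 0 - max (- D t) 0) has_integral (P x - N x)) {a..x}"
      unfolding P_def N_def clamped_primitive_def using x
      by (auto intro!: has_integral_diff integrable_integral integrable_subinterval_real[OF int(1)]
            integrable_subinterval_real[OF int(2)])
    moreover have "(\<lambda>t. max (D t) 0 - max (- D t) 0) = D"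
      by (auto simp: fun_eq_iff)
    ultimately have "W x - W a = P x - N x"
      using has_integral_unique by metis
    then show ?thesis by simp
  qed
qed

text \<open>Helly's selection theorem, applied separately to the two monotone parts of the Jordan
  decompositions.\<close>
lemma bounded_variation_AE_convergent_subseq:
  fixes W D :: "nat \<Rightarrow> real \<Rightarrow> real"
  assumes ab: "a \<le> b"
    and W: "\<And>n x. (W n has_real_derivative D n x) (at x)" and D: "\<And>n. continuous_on UNIV (D n)"
    and bounded: "\<And>n. \<bar>W n a\<bar> \<le> K"
    and variation: "\<And>n. integral {a..b} (\<lambda>x. \<bar>D n x\<bar>) \<le> V"
  obtains r v where "strict_mono r" "v \<in> borel_measurable borel" "\<And>x. \<bar>v x\<bar> \<le> K + 2 * V"
    "AE x in lborel. x \<in> {a..b} \<longrightarrow> (\<lambda>k. W (r k) x) \<longlonglongrightarrow> v x"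
proof -
  define P where "P n = clamped_primitive a b (\<lambda>t. max (D n t) 0)" for n
  define N where "N n = clamped_primitive a b (\<lambda>t. max (- D n t) 0)" for n
  note Jordan = Jordan_decomposition_C1[OF W D ab, folded P_def N_def]
  have bounds: "\<bar>P n x\<bar> \<le> V" "\<bar>N n x\<bar> \<le> V" for n x
    using Jordan(6,7)[of n x] variation[of n] by linarith+
  obtain s1 P' where s1: "strict_mono s1" "P' \<in> borel_measurable borel" "\<And>x. \<bar>P' x\<bar> \<le> V"
    and lim_P: "AE x in lborel. (\<lambda>n. P (s1 n) x) \<longlonglongrightarrow> P' x"
    using Helly_selection_AE[of P V, OF Jordan(4) Jordan(2) bounds(1)] by blast
  obtain s2 N' where s2: "strict_mono s2" "N' \<in> borel_measurable borel" "\<And>x. \<bar>N' x\<bar> \<le> V"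
    and lim_N: "AE x in lborel. (\<lambda>n. N (s1 (s2 n)) x) \<longlonglongrightarrow> N' x"
    using Helly_selection_AE[of "\<lambda>n. N (s1 n)" V, OF Jordan(5) Jordan(3) bounds(2)] by blast
  have "\<forall>k. W (s1 (s2 k)) a \<in> cball 0 K"
    using bounded by simp
  then obtain A s3 where A: "A \<in> cball 0 K" and s3: "strict_mono s3"
    and "((\<lambda>k. W (s1 (s2 k)) a) \<circ> s3) \<longlonglongrightarrow> A"
    by (rule seq_compactE[OF compact_imp_seq_compact[OF compact_cball]])
  then have lim_A: "(\<lambda>k. W (s1 (s2 (s3 k))) a) \<longlonglongrightarrow> A"
    by (simp add: o_def)
  define r where "r = s1 \<circ> s2 \<circ> s3"
  define v where "v x = A + P' x - N' x" for x
  have "AE x in lborel. x \<in> {a..b} \<longrightarrow> (\<lambda>k. W (r k) x) \<longlonglongrightarrow> v x"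
    using lim_P lim_N
  proof eventually_elim
    case (elim x)
    have "(\<lambda>k. P (s1 (s2 (s3 k))) x) \<longlonglongrightarrow> P' x"
      using LIMSEQ_subseq_LIMSEQ[OF elim(1) strict_mono_o[OF s2(1) s3]] by (simp add: o_def)
    moreover have "(\<lambda>k. N (s1 (s2 (s3 k))) x) \<longlonglongrightarrow> N' x"
      using LIMSEQ_subseq_LIMSEQ[OF elim(2) s3] by (simp add: o_def)
    ultimately have "(\<lambda>k. W (r k) a + P (r k) x - N (r k) x) \<longlonglongrightarrow> v x"
      unfolding r_def v_def using lim_A by (auto intro!: tendsto_intros)
    then show ?case
      using Jordan(1)[of x] by simp
  qed
  moreover have "strict_mono r"
    unfolding r_def by (intro strict_mono_o s1 s2 s3)
  moreover have "\<bar>v x\<bar> \<le> K + 2 * V" for x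
    using A s1(3)[of x] s2(3)[of x] unfolding v_def by auto
  moreover have "v \<in> borel_measurable borel"
    unfolding v_def using s1(2) s2(2) by measurable
  ultimately show thesis
    using that by blast
qed

definition window_average :: "real \<Rightarrow> (real \<Rightarrow> real) \<Rightarrow> real \<Rightarrow> real" where
  "window_average e U x = integral {x - e..x + e} U / (2 * e)"

lemma has_real_derivative_window_integral:
  fixes U :: "real \<Rightarrow> real"
  assumes U: "continuous_on UNIV U" and e: "e > 0"
  shows "((\<lambda>y. integral {y - e..y + e} U) has_real_derivative (U (x + e) - U (x - e))) (at x)"
proof -
  define p where "p = x - e - 1"
  define G where "G z = integral {p..z} U" for z
  have G: "(G has_real_derivative U z) (at z)" if "p < z" for z
  proof -
    have "(G has_real_derivative U z) (at z within {p..z+1})"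
      unfolding G_def by (rule integral_has_real_derivative) (use U that in \<open>auto intro: continuous_on_subset\<close>)
    moreover have "at z within {p..z+1} = at z"
      using that by (intro at_within_Icc_at) auto
    ultimately show ?thesis by simp
  qed
  have "((\<lambda>y. G (y + e)) has_real_derivative U (x + e)) (at x)"
    by (subst DERIV_shift[symmetric]) (rule G, use e in \<open>simp add: p_def\<close>)
  moreover have "((\<lambda>y. G (y + - e)) has_real_derivative U (x + - e)) (at x)"
    by (subst DERIV_shift[symmetric]) (rule G, use e in \<open>simp add: p_def\<close>)
  ultimately have "((\<lambda>y. G (y + e) - G (y + - e)) has_real_derivative U (x + e) - U (x - e)) (at x)"
    using DERIV_diff by fastforce
  then show ?thesis
  proof (rule has_field_derivative_transform_within_open[where S="{x - 1 <..< x + 1}"])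
    fix y assume y: "y \<in> {x - 1<..<x + 1}"
    have "U integrable_on {p..y + e}"
      by (rule integrable_continuous_real) (use U in \<open>auto intro: continuous_on_subset\<close>)
    then have "integral {p..y - e} U + integral {y - e..y + e} U = integral {p..y + e} U"
      using y e by (intro Henstock_Kurzweil_Integration.integral_combine) (auto simp: p_def)
    then show "G (y + e) - G (y + - e) = integral {y - e..y + e} U"
      unfolding G_def by simp
  qed auto
qed

lemma has_real_derivative_window_average:
  assumes "continuous_on UNIV U" "e > 0"
  shows "(window_average e U has_real_derivative (U (x + e) - U (x - e)) / (2 * e)) (at x)"
  unfolding window_average_def[abs_def]
  by (intro DERIV_cdivide has_real_derivative_window_integral assms)

lemma abs_window_average_le:
  assumes "continuous_on UNIV U" "e > 0" "\<And>x. \<bar>U x\<bar> \<le> K"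
  shows "\<bar>window_average e U x\<bar> \<le> K"
proof -
  have "norm (integral {x - e..x + e} U) \<le> K * ((x + e) - (x - e))"
    using assms by (intro integral_bound continuous_on_subset[OF assms(1)]) auto
  then show ?thesis
    using assms(2) unfolding window_average_def by (simp add: field_simps abs_divide)
qed

lemma window_average_variation_le:
  assumes "window_oscillation_integral_le a b e V U" "continuous_on UNIV U" "e > 0" "V \<ge> 0"
  shows "integral {a..b} (\<lambda>x. \<bar>(U (x + e) - U (x - e)) / (2 * e)\<bar>) \<le> V / 2"
proof -
  obtain \<theta> where \<theta>: "\<theta> \<in> borel_measurable lborel"
    and osc: "\<forall>x\<in>{a..b}. \<forall>s\<in>{x - e..x + e}. \<forall>t\<in>{x - e..x + e}. \<bar>U s - U t\<bar> \<le> \<theta> x"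
    and int_\<theta>: "(\<integral>\<^sup>+x\<in>{a..b}. ennreal (\<theta> x) \<partial>lborel) \<le> ennreal (e * V)"
    using assms(1) unfolding window_oscillation_integral_le_def by blast
  define D where "D x = \<bar>(U (x + e) - U (x - e)) / (2 * e)\<bar>" for x
  have "(\<integral>\<^sup>+x\<in>{a..b}. ennreal (D x) \<partial>lborel) \<le> (\<integral>\<^sup>+x\<in>{a..b}. ennreal (1 / (2 * e)) * ennreal (\<theta> x) \<partial>lborel)"
  proof (intro nn_integral_mono)
    fix x
    have "ennreal (D x) \<le> ennreal (1 / (2 * e)) * ennreal (\<theta> x)" if "x \<in> {a..b}"
    proof -
      have "D x \<le> 1 / (2 * e) * \<theta> x"
        using osc that assms(3) unfolding D_def by (simp add: abs_divide divide_right_mono)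
      then show ?thesis
        using assms(3) by (simp add: ennreal_leI ennreal_mult'[symmetric])
    qed
    then show "ennreal (D x) * indicator {a..b} x \<le> ennreal (1 / (2 * e)) * ennreal (\<theta> x) * indicator {a..b} x"
      by (auto split: split_indicator)
  qed
  also have "\<dots> = ennreal (1 / (2 * e)) * (\<integral>\<^sup>+x\<in>{a..b}. ennreal (\<theta> x) \<partial>lborel)"
    by (subst nn_integral_cmult[symmetric]) (use \<theta> in \<open>auto simp: mult.assoc\<close>)
  also have "\<dots> \<le> ennreal (1 / (2 * e)) * ennreal (e * V)"
    by (intro mult_left_mono int_\<theta>) auto
  also have "\<dots> = ennreal (V / 2)"
    using assms(3) by (subst ennreal_mult'[symmetric]) (auto simp: field_simps)
  finally have D_le: "(\<integral>\<^sup>+x\<in>{a..b}. ennreal (D x) \<partial>lborel) \<le> ennreal (V / 2)" .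
  have "continuous_on UNIV D"
    unfolding D_def using assms(3) by (intro continuous_intros continuous_on_compose2[OF assms(2)]) auto
  moreover have "D x \<ge> 0" for x
    unfolding D_def by simp
  ultimately have "D \<in> borel_measurable borel" "\<And>x. D x \<ge> 0"
    by (auto intro: borel_measurable_continuous_onI)
  then have "(\<integral>\<^sup>+x\<in>{a..b}. ennreal (D x) \<partial>lborel) = ennreal (integral {a..b} D)"
    using D_le by (intro set_nn_integral_lborel_eq_integral)
      (auto simp: set_borel_measurable_def less_top[symmetric] top_unique intro: le_less_trans)
  then show ?thesis
    using D_le assms(4) unfolding D_def by simp
qed

lemma set_integral_abs_diff_window_average_le:
  assumes "window_oscillation_integral_le a b e V U" "continuous_on UNIV U" "e > 0" "V \<ge> 0"
  shows "(LINT x:{a<..<b}|lborel. \<bar>U x - window_average e U x\<bar>) \<le> e * V"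
proof -
  obtain \<theta> where osc: "\<forall>x\<in>{a..b}. \<forall>s\<in>{x - e..x + e}. \<forall>t\<in>{x - e..x + e}. \<bar>U s - U t\<bar> \<le> \<theta> x"
    and int_\<theta>: "(\<integral>\<^sup>+x\<in>{a..b}. ennreal (\<theta> x) \<partial>lborel) \<le> ennreal (e * V)"
    using assms(1) unfolding window_oscillation_integral_le_def by blast
  have U_int: "U integrable_on {x - e..x + e}" for x
    by (rule integrable_continuous_real) (use assms(2) in \<open>auto intro: continuous_on_subset\<close>)
  have diff_le: "\<bar>U x - window_average e U x\<bar> \<le> \<theta> x" if x: "x \<in> {a..b}" for x
  proof -
    have "((\<lambda>s. U x - U s) has_integral (2 * e) * U x - integral {x - e..x + e} U) {x - e..x + e}"
      using has_integral_const_real[of "U x" "x - e" "x + e"] assms(3)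
      by (intro has_integral_diff integrable_integral U_int) auto
    moreover have "norm (integral {x - e..x + e} (\<lambda>s. U x - U s)) \<le> \<theta> x * ((x + e) - (x - e))"
      using assms(3) osc x by (intro integral_bound continuous_intros continuous_on_subset[OF assms(2)]) auto
    ultimately have "\<bar>(2 * e) * U x - integral {x - e..x + e} U\<bar> \<le> \<theta> x * (2 * e)"
      by (simp add: integral_unique)
    then show ?thesis
      using assms(3) unfolding window_average_def by (simp add: abs_divide field_simps)
  qed
  have W_cont: "continuous_on UNIV (window_average e U)"
    using has_real_derivative_window_average[OF assms(2,3)]
    by (intro continuous_at_imp_continuous_on) (auto intro: DERIV_isCont)
  have "(LINT x:{a<..<b}|lborel. \<bar>U x - window_average e U x\<bar>)
          = enn2real (\<integral>\<^sup>+x. ennreal (indicator {a<..<b} x *\<^sub>R \<bar>U x - window_average e U x\<bar>) \<partial>lborel)"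
    unfolding set_lebesgue_integral_def
    using borel_measurable_continuous_onI[OF assms(2)] borel_measurable_continuous_onI[OF W_cont]
    by (intro integral_eq_nn_integral) auto
  also have "\<dots> \<le> enn2real (\<integral>\<^sup>+x\<in>{a..b}. ennreal (\<theta> x) \<partial>lborel)"
  proof (rule enn2real_mono)
    show "(\<integral>\<^sup>+x. ennreal (indicator {a<..<b} x *\<^sub>R \<bar>U x - window_average e U x\<bar>) \<partial>lborel)
            \<le> (\<integral>\<^sup>+x\<in>{a..b}. ennreal (\<theta> x) \<partial>lborel)"
      by (rule nn_integral_mono) (auto simp: diff_le ennreal_leI split: split_indicator)
    show "(\<integral>\<^sup>+x\<in>{a..b}. ennreal (\<theta> x) \<partial>lborel) < top"
      using int_\<theta> by (auto simp: less_top[symmetric] top_unique intro: le_less_trans)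
  qed
  also have "\<dots> \<le> e * V"
    using int_\<theta> assms(3,4) by (metis enn2real_ennreal enn2real_mono ennreal_less_top mult_nonneg_nonneg order_less_le)
  finally show ?thesis .
qed

lemma set_integral_abs_diff_tendsto_zero:
  fixes W :: "nat \<Rightarrow> real \<Rightarrow> real"
  assumes meas: "\<And>k. W k \<in> borel_measurable borel" "v \<in> borel_measurable borel"
    and bounded: "\<And>k x. \<bar>W k x\<bar> \<le> B" "\<And>x. \<bar>v x\<bar> \<le> B"
    and lim: "AE x in lborel. x \<in> {a<..<b} \<longrightarrow> (\<lambda>k. W k x) \<longlonglongrightarrow> v x"
  shows "(\<lambda>k. LINT x:{a<..<b}|lborel. \<bar>W k x - v x\<bar>) \<longlonglongrightarrow> 0"
proof -
  have "set_integrable lborel {a<..<b} (\<lambda>_. 2 * B)"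
    by (rule set_integrable_bounded_Ioo) auto
  have "(\<lambda>k. LINT x|lborel. indicator {a<..<b} x *\<^sub>R \<bar>W k x - v x\<bar>) \<longlonglongrightarrow> (LINT x::real|lborel. 0)"
  proof (rule integral_dominated_convergence[where w="\<lambda>x. indicator {a<..<b} x *\<^sub>R (2 * B)"
        and s="\<lambda>k x. indicator {a<..<b} x *\<^sub>R \<bar>W k x - v x\<bar>"])
    show "AE x in lborel. (\<lambda>k. indicator {a<..<b} x *\<^sub>R \<bar>W k x - v x\<bar>) \<longlonglongrightarrow> 0"
      using lim
    proof eventually_elim
      case (elim x)
      then show ?case
        by (cases "x \<in> {a<..<b}") (auto intro!: tendsto_rabs_zero LIM_zero)
    qed
    show "AE x in lborel. norm (indicator {a<..<b} x *\<^sub>R \<bar>W k x - v x\<bar>) \<le> indicator {a<..<b} x *\<^sub>R (2 * B)" for k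
    proof (intro AE_I2)
      fix x
      have "\<bar>W k x - v x\<bar> \<le> 2 * B"
        using bounded(1)[of k x] bounded(2)[of x] by linarith
      then show "norm (indicator {a<..<b} x *\<^sub>R \<bar>W k x - v x\<bar>) \<le> indicator {a<..<b} x *\<^sub>R (2 * B)"
        by (simp split: split_indicator)
    qed
  qed (use meas \<open>set_integrable lborel {a<..<b} (\<lambda>_. 2 * B)\<close> in \<open>auto simp: set_integrable_def\<close>)
  then show ?thesis
    by (simp add: set_lebesgue_integral_def)
qed

lemma set_integral_mult_le_add_abs_diff:
  fixes f g \<psi> :: "real \<Rightarrow> real"
  assumes meas: "f \<in> borel_measurable borel" "g \<in> borel_measurable borel" "\<psi> \<in> borel_measurable borel"
    and bounded: "\<And>x. \<bar>f x\<bar> \<le> B" "\<And>x. \<bar>g x\<bar> \<le> B" "\<And>x. \<bar>\<psi> x\<bar> \<le> M"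
  shows "(LINT x:{a<..<b}|lborel. f x * \<psi> x)
           \<le> (LINT x:{a<..<b}|lborel. g x * \<psi> x) + M * (LINT x:{a<..<b}|lborel. \<bar>g x - f x\<bar>)"
proof -
  have B: "0 \<le> B" and M: "0 \<le> M"
    using bounded(1)[of 0] bounded(3)[of 0] by linarith+
  have diff: "\<bar>f x - g x\<bar> \<le> 2 * B" for x
    using bounded(1,2)[of x] by linarith
  have int_g: "set_integrable lborel {a<..<b} (\<lambda>x. g x * \<psi> x)"
    using meas bounded(2,3) B by (intro set_integrable_bounded_Ioo[where B="B * M"]) (auto simp: abs_mult intro!: mult_mono)
  have int_diff: "set_integrable lborel {a<..<b} (\<lambda>x. (f x - g x) * \<psi> x)"
    using meas bounded(3) diff B by (intro set_integrable_bounded_Ioo[where B="2 * B * M"]) (auto simp: abs_mult intro!: mult_mono)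
  have int_abs: "set_integrable lborel {a<..<b} (\<lambda>x. M * \<bar>g x - f x\<bar>)"
    using meas diff M by (intro set_integrable_bounded_Ioo[where B="M * (2 * B)"])
      (auto simp: abs_mult abs_minus_commute intro!: mult_left_mono)
  have "(LINT x:{a<..<b}|lborel. f x * \<psi> x) = (LINT x:{a<..<b}|lborel. g x * \<psi> x + (f x - g x) * \<psi> x)"
    by (simp add: algebra_simps)
  also have "\<dots> = (LINT x:{a<..<b}|lborel. g x * \<psi> x) + (LINT x:{a<..<b}|lborel. (f x - g x) * \<psi> x)"
    by (rule set_integral_add(2)[OF int_g int_diff])
  also have "(LINT x:{a<..<b}|lborel. (f x - g x) * \<psi> x) \<le> (LINT x:{a<..<b}|lborel. M * \<bar>g x - f x\<bar>)"
  proof (rule set_integral_mono[OF int_diff int_abs])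
    show "(f x - g x) * \<psi> x \<le> M * \<bar>g x - f x\<bar>" for x
      using abs_ge_self[of "(f x - g x) * \<psi> x"] mult_left_mono[OF bounded(3)[of x] abs_ge_zero[of "g x - f x"]]
      by (simp add: abs_mult abs_minus_commute mult.commute)
  qed
  finally show ?thesis
    by simp
qed

lemma BV_of_L1_limit:
  fixes W D :: "nat \<Rightarrow> real \<Rightarrow> real"
  assumes W: "\<And>k x. (W k has_real_derivative D k x) (at x)" and D: "\<And>k. continuous_on UNIV (D k)"
    and variation: "\<And>k. integral {a..b} (\<lambda>x. \<bar>D k x\<bar>) \<le> V"
    and bounded: "\<And>k x. \<bar>W k x\<bar> \<le> B" "\<And>x. \<bar>v x\<bar> \<le> B" and v: "v \<in> borel_measurable borel"
    and lim: "(\<lambda>k. LINT x:{a<..<b}|lborel. \<bar>W k x - v x\<bar>) \<longlonglongrightarrow> 0"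
  shows "BV a b v"
  unfolding BV_def
proof (intro conjI exI allI impI)
  show "set_integrable lborel {a<..<b} v"
    using v bounded(2) by (rule set_integrable_bounded_Ioo)
  fix \<phi> assume \<phi>: "test_fun a b \<phi>"
  obtain M where M: "\<And>x. \<bar>deriv \<phi> x\<bar> \<le> M"
    using test_fun_deriv_bounded[OF \<phi>] by blast
  obtain c d where "continuous_on UNIV (deriv \<phi>)"
    using test_fun_deriv[OF \<phi>] by metis
  then have deriv_meas: "deriv \<phi> \<in> borel_measurable borel"
    by (rule borel_measurable_continuous_onI)
  have W_meas: "W k \<in> borel_measurable borel" for k
    using W by (intro borel_measurable_continuous_onI continuous_at_imp_continuous_on) (auto intro: DERIV_isCont)
  have "(LINT x:{a<..<b}|lborel. v x * deriv \<phi> x)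
          \<le> V + M * (LINT x:{a<..<b}|lborel. \<bar>W k x - v x\<bar>)" for k
    using set_integral_mult_le_add_abs_diff[of v "W k" "deriv \<phi>" B M a b, OF v W_meas deriv_meas bounded(2,1) M]
      order_trans[OF set_integral_mult_deriv_test_fun_le[OF W D \<phi>] variation[of k]]
    by linarith
  moreover have "(\<lambda>k. V + M * (LINT x:{a<..<b}|lborel. \<bar>W k x - v x\<bar>)) \<longlonglongrightarrow> V + M * 0"
    using lim by (intro tendsto_intros)
  ultimately show "(LINT x:{a<..<b}|lborel. v x * deriv \<phi> x) \<le> V"
    by (intro LIMSEQ_le_const) auto
qed

lemma set_integral_abs_diff_tendsto_zero_triangle:
  fixes U W :: "nat \<Rightarrow> real \<Rightarrow> real"
  assumes meas: "\<And>k. U k \<in> borel_measurable borel" "\<And>k. W k \<in> borel_measurable borel" "v \<in> borel_measurable borel"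
    and bounded: "\<And>k x. \<bar>U k x\<bar> \<le> B" "\<And>k x. \<bar>W k x\<bar> \<le> B" "\<And>x. \<bar>v x\<bar> \<le> B"
    and close: "\<And>k. (LINT x:{a<..<b}|lborel. \<bar>U k x - W k x\<bar>) \<le> \<delta> k" "\<delta> \<longlonglongrightarrow> 0"
    and lim: "(\<lambda>k. LINT x:{a<..<b}|lborel. \<bar>W k x - v x\<bar>) \<longlonglongrightarrow> 0"
  shows "(\<lambda>k. LINT x:{a<..<b}|lborel. \<bar>U k x - v x\<bar>) \<longlonglongrightarrow> 0"
proof (rule tendsto_sandwich[where f="\<lambda>_. 0"])
  have integrable: "set_integrable lborel {a<..<b} (\<lambda>x. \<bar>f x - g x\<bar>)"
    if "f \<in> borel_measurable borel" "g \<in> borel_measurable borel" "\<And>x. \<bar>f x\<bar> \<le> B" "\<And>x. \<bar>g x\<bar> \<le> B" for f g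
  proof (intro set_integrable_bounded_Ioo[where B="2 * B"])
    show "\<bar>\<bar>f x - g x\<bar>\<bar> \<le> 2 * B" for x
      using that(3)[of x] that(4)[of x] by linarith
  qed (use that in auto)
  have "(LINT x:{a<..<b}|lborel. \<bar>U k x - v x\<bar>)
          \<le> (LINT x:{a<..<b}|lborel. \<bar>U k x - W k x\<bar>) + (LINT x:{a<..<b}|lborel. \<bar>W k x - v x\<bar>)" for k
    by (subst set_integral_add(2)[symmetric])
      (auto intro!: set_integral_mono integrable meas bounded)
  then show "\<forall>\<^sub>F k in sequentially. (LINT x:{a<..<b}|lborel. \<bar>U k x - v x\<bar>)
               \<le> \<delta> k + (LINT x:{a<..<b}|lborel. \<bar>W k x - v x\<bar>)"
    using close(1) by (intro always_eventually allI) (meson add_right_mono order_trans)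
  show "\<forall>\<^sub>F k in sequentially. 0 \<le> (LINT x:{a<..<b}|lborel. \<bar>U k x - v x\<bar>)"
    unfolding set_lebesgue_integral_def
    by (intro always_eventually allI Bochner_Integration.integral_nonneg) (auto simp: indicator_def)
  show "(\<lambda>k. \<delta> k + (LINT x:{a<..<b}|lborel. \<bar>W k x - v x\<bar>)) \<longlonglongrightarrow> 0"
    using tendsto_add[OF close(2) lim] by simp
qed simp

text \<open>The window averages at scale \<open>eps n\<close> are \<open>O(eps n)\<close>-close to \<open>U n\<close> in \<open>L\<^sup>1\<close> and have
  uniformly bounded variation, so Helly's theorem applies to them.\<close>
lemma L1_convergent_subseq_of_window_oscillation:
  fixes eps :: "nat \<Rightarrow> real" and U :: "nat \<Rightarrow> real \<Rightarrow> real"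
  assumes ab: "a \<le> b" and V: "V \<ge> 0" and eps: "\<And>n. eps n > 0" "eps \<longlonglongrightarrow> 0"
    and U: "\<And>n. continuous_on UNIV (U n)" "\<And>n x. \<bar>U n x\<bar> \<le> K"
    and osc: "\<And>n. window_oscillation_integral_le a b (eps n) V (U n)"
  shows "\<exists>v r. BV a b v \<and> (AE x in lborel. x \<in> {a<..<b} \<longrightarrow> \<bar>v x\<bar> \<le> K) \<and> strict_mono r \<and>
           (\<lambda>k. LINT x:{a<..<b}|lborel. \<bar>U (r k) x - v x\<bar>) \<longlonglongrightarrow> 0"
proof -
  define W where "W n = window_average (eps n) (U n)" for n
  define D where "D n x = (U n (x + eps n) - U n (x - eps n)) / (2 * eps n)" for n x
  have W_deriv: "(W n has_real_derivative D n x) (at x)" for n x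
    unfolding W_def D_def by (rule has_real_derivative_window_average[OF U(1) eps(1)])
  have D_cont: "continuous_on UNIV (D n)" for n
    unfolding D_def using eps(1)[of n] by (intro continuous_intros continuous_on_compose2[OF U(1)]) auto
  have W_bounded: "\<bar>W n x\<bar> \<le> K" for n x
    unfolding W_def by (rule abs_window_average_le[OF U(1) eps(1) U(2)])
  have variation: "integral {a..b} (\<lambda>x. \<bar>D n x\<bar>) \<le> V / 2" for n
    unfolding D_def by (rule window_average_variation_le[OF osc U(1) eps(1) V])
  obtain r v where r: "strict_mono r" and v: "v \<in> borel_measurable borel" "\<And>x. \<bar>v x\<bar> \<le> K + 2 * (V / 2)"
    and lim: "AE x in lborel. x \<in> {a..b} \<longrightarrow> (\<lambda>k. W (r k) x) \<longlonglongrightarrow> v x"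
    using bounded_variation_AE_convergent_subseq[of a b W D K "V / 2", OF ab W_deriv D_cont W_bounded variation]
    by blast
  define B where "B = K + V"
  have bounds: "\<bar>v x\<bar> \<le> B" "\<bar>W n x\<bar> \<le> B" "\<bar>U n x\<bar> \<le> B" for n x
    unfolding B_def using v(2)[of x] W_bounded[of n x] U(2)[of n x] V by auto
  have W_meas: "W n \<in> borel_measurable borel" for n
    using W_deriv by (intro borel_measurable_continuous_onI continuous_at_imp_continuous_on) (auto intro: DERIV_isCont)
  have U_meas: "U n \<in> borel_measurable borel" for n
    using U(1) by (rule borel_measurable_continuous_onI)
  have lim_Ioo: "AE x in lborel. x \<in> {a<..<b} \<longrightarrow> (\<lambda>k. W (r k) x) \<longlonglongrightarrow> v x"
    using lim by eventually_elim auto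
  have W_L1: "(\<lambda>k. LINT x:{a<..<b}|lborel. \<bar>W (r k) x - v x\<bar>) \<longlonglongrightarrow> 0"
    using W_meas v(1) bounds(2,1) lim_Ioo by (rule set_integral_abs_diff_tendsto_zero)
  have "BV a b v"
    using W_deriv D_cont variation bounds(2,1) v(1) W_L1 by (rule BV_of_L1_limit)
  moreover have "AE x in lborel. x \<in> {a<..<b} \<longrightarrow> \<bar>v x\<bar> \<le> K"
    using lim_Ioo by eventually_elim (use W_bounded in \<open>auto intro: LIMSEQ_le_const2 tendsto_rabs\<close>)
  moreover have "(\<lambda>k. LINT x:{a<..<b}|lborel. \<bar>U (r k) x - v x\<bar>) \<longlonglongrightarrow> 0"
  proof (rule set_integral_abs_diff_tendsto_zero_triangle)
    show "(LINT x:{a<..<b}|lborel. \<bar>U (r k) x - W (r k) x\<bar>) \<le> eps (r k) * V" for k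
      unfolding W_def by (rule set_integral_abs_diff_window_average_le[OF osc U(1) eps(1) V])
    have "(\<lambda>k. eps (r k)) \<longlonglongrightarrow> 0"
      using LIMSEQ_subseq_LIMSEQ[OF eps(2) r] by (simp add: o_def)
    then show "(\<lambda>k. eps (r k) * V) \<longlonglongrightarrow> 0"
      by (rule tendsto_mult_left_zero)
  qed (use U_meas W_meas v(1) bounds W_L1 in auto)
  ultimately show ?thesis
    using r by blast
qed

theorem mainTheorem16:
  fixes a b c0 K C0 :: real and eps :: "nat \<Rightarrow> real" and u :: "nat \<Rightarrow> real \<Rightarrow> real"
  assumes "a < b" and "c0 > 0" and "K > 0"
    and "\<And>n. eps n > 0" and "eps \<longlonglongrightarrow> 0"
    and "\<And>n. set_integrable lborel {a<..<b} (u n)"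
    and "\<And>n. relaxed_energy a b c0 K (eps n) (u n) \<le> ennreal C0"
  shows "\<exists>v r. BV a b v \<and> (AE x in lborel. x \<in> {a<..<b} \<longrightarrow> \<bar>v x\<bar> \<le> K) \<and>
           strict_mono r \<and>
           (\<lambda>k. LINT x:{a<..<b}|lborel. \<bar>u (r k) x - v x\<bar>) \<longlonglongrightarrow> 0"
proof -
  define V where "V = 2 * max K 1 * (max C0 0 + 1) / c0 + (b - a) + (max C0 0 + 1)"
  have ab: "a \<le> b" and V: "V \<ge> 0"
    using assms(1,2) unfolding V_def by auto
  have "\<exists>U. continuous_on UNIV U \<and> (\<forall>x. \<bar>U x\<bar> \<le> K) \<and> (AE x in lborel. x \<in> {a<..<b} \<longrightarrow> u n x = U x) \<and>
          window_oscillation_integral_le a b (eps n) V U" for n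
    unfolding V_def by (rule finite_energy_window_oscillation[OF ab assms(2) less_imp_le[OF assms(3)] assms(4,7)])
  then obtain U where U: "\<And>n. continuous_on UNIV (U n)" "\<And>n x. \<bar>U n x\<bar> \<le> K"
    "\<And>n. AE x in lborel. x \<in> {a<..<b} \<longrightarrow> u n x = U n x" "\<And>n. window_oscillation_integral_le a b (eps n) V (U n)"
    by metis
  obtain v r where v: "BV a b v" "AE x in lborel. x \<in> {a<..<b} \<longrightarrow> \<bar>v x\<bar> \<le> K" "strict_mono r"
    and lim: "(\<lambda>k. LINT x:{a<..<b}|lborel. \<bar>U (r k) x - v x\<bar>) \<longlonglongrightarrow> 0"
    using L1_convergent_subseq_of_window_oscillation[OF ab V assms(4,5) U(1,2,4)] by blast
  have "set_integrable lborel {a<..<b} (U n)" for n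
    using U(1,2) by (intro set_integrable_bounded_Ioo borel_measurable_continuous_onI)
  moreover have "set_integrable lborel {a<..<b} v"
    using v(1) unfolding BV_def by blast
  ultimately have "(LINT x:{a<..<b}|lborel. \<bar>u n x - v x\<bar>) = (LINT x:{a<..<b}|lborel. \<bar>U n x - v x\<bar>)" for n
    by (rule set_integral_abs_diff_cong_AE[OF assms(6) _ _ U(3)])
  then show ?thesis
    using v lim by (intro exI[of _ v] exI[of _ r]) simp
qed

end
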